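(* Let $G$ be a graph with no isolated vertex and let $H$ be a nontrivial graph. Then there exists a $\gamma_{(1,0)}^s(G\circ H)$-function $f$ such that $f(V(H_u))=\sum_{y\in V(H)}f(u,y)\le 2$ for every $u\in V(G)$.
   Context: All graphs are finite and simple; $N(v)$ denotes the open neighbourhood of a vertex $v$; a graph is nontrivial if it has at least two vertices. For an integer $l\ge 1$ and $w=(w_0,\dots,w_l)$ with $w_0\ge1$ and $w_i\ge 0$ integers, a function $f:V(G)\to\{0,\dots,l\}$, with $V_i=\{v: f(v)=i\}$, is a $w$-dominating function if $f(N(v))=\sum_{u\in N(v)}f(u)\ge w_i$ for every $v\in V_i$ and every $i$. Its weight is $\omega(f)=\sum_{v\in V(G)}f(v)$. For adjacent $v,u$ with $f(v)=0$, $f(u)>0$, the function $f_{u\to v}$ is defined by $f_{u\to v}(v)=1$, $f_{u\to v}(u)=f(u)-1$, and $f_{u\to v}(x)=f(x)$ otherwise. A $w$-dominating function $f$ is secure if for every $v$ with $f(v)=0$ there is $u\in N(v)$ with $f(u)>0$ such that $f_{u\to v}$ is also $w$-dominating. $\gamma_w^s(G)$ is the minimum weight of a secure $w$-dominating function, and a $\gamma_w^s(G)$-function is a secure $w$-dominating function of weight $\gamma_w^s(G)$. The lexicographic product $G\circ H$ has vertex set $V(G)\times V(H)$, with $(u,v)(x,y)$ an edge iff $ux\in E(G)$, or $u=x$ and $vy\in E(H)$. For $u\in V(G)$, $H_u$ is the subgraph of $G\circ H$ induced by $\{u\}\times V(H)$. *)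

theory Defs
  imports Main
begin

definition simple_graph :: "'a set \<Rightarrow> ('a \<Rightarrow> 'a \<Rightarrow> bool) \<Rightarrow> bool" where
  "simple_graph V E \<longleftrightarrow> finite V \<and> (\<forall>x y. E x y \<longrightarrow> x \<in> V \<and> y \<in> V)
     \<and> (\<forall>x y. E x y \<longrightarrow> E y x) \<and> (\<forall>x. \<not> E x x)"

definition nbhd :: "'a set \<Rightarrow> ('a \<Rightarrow> 'a \<Rightarrow> bool) \<Rightarrow> 'a \<Rightarrow> 'a set" where
  "nbhd V E v = {u \<in> V. E v u}"

definition no_isolated :: "'a set \<Rightarrow> ('a \<Rightarrow> 'a \<Rightarrow> bool) \<Rightarrow> bool" where
  "no_isolated V E \<longleftrightarrow> (\<forall>v \<in> V. nbhd V E v \<noteq> {})"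

definition nontrivial :: "'a set \<Rightarrow> bool" where
  "nontrivial V \<longleftrightarrow> card V \<ge> 2"

definition lex_V :: "'a set \<Rightarrow> 'b set \<Rightarrow> ('a \<times> 'b) set" where
  "lex_V VG VH = VG \<times> VH"

definition lex_E :: "('a \<Rightarrow> 'a \<Rightarrow> bool) \<Rightarrow> ('b \<Rightarrow> 'b \<Rightarrow> bool)
                     \<Rightarrow> ('a \<times> 'b) \<Rightarrow> ('a \<times> 'b) \<Rightarrow> bool" where
  "lex_E EG EH p q \<longleftrightarrow> EG (fst p) (fst q) \<or> (fst p = fst q \<and> EH (snd p) (snd q))"

text \<open>Weight vector w = (w_0,...,w_l) as a list of length l+1 (l = length w - 1).
  f(S) = sum of f over S.\<close>
definition fsum :: "('a \<Rightarrow> nat) \<Rightarrow> 'a set \<Rightarrow> nat" where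
  "fsum f S = (\<Sum>x\<in>S. f x)"

definition w_dom :: "nat list \<Rightarrow> 'a set \<Rightarrow> ('a \<Rightarrow> 'a \<Rightarrow> bool) \<Rightarrow> ('a \<Rightarrow> nat) \<Rightarrow> bool" where
  "w_dom w V E f \<longleftrightarrow> (\<forall>v\<in>V. f v \<le> length w - 1)
     \<and> (\<forall>v\<in>V. fsum f (nbhd V E v) \<ge> w ! (f v))
     \<and> (\<forall>v. v \<notin> V \<longrightarrow> f v = 0)"

definition move :: "('a \<Rightarrow> nat) \<Rightarrow> 'a \<Rightarrow> 'a \<Rightarrow> ('a \<Rightarrow> nat)" where
  "move f u v = (\<lambda>x. if x = v then 1 else if x = u then f u - 1 else f x)"

definition secure_w_dom :: "nat list \<Rightarrow> 'a set \<Rightarrow> ('a \<Rightarrow> 'a \<Rightarrow> bool) \<Rightarrow> ('a \<Rightarrow> nat) \<Rightarrow> bool" where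
  "secure_w_dom w V E f \<longleftrightarrow> w_dom w V E f \<and>
     (\<forall>v\<in>V. f v = 0 \<longrightarrow> (\<exists>u\<in>nbhd V E v. f u > 0 \<and> w_dom w V E (move f u v)))"

definition weight :: "'a set \<Rightarrow> ('a \<Rightarrow> nat) \<Rightarrow> nat" where
  "weight V f = (\<Sum>v\<in>V. f v)"

definition secure_w_dom_number :: "nat list \<Rightarrow> 'a set \<Rightarrow> ('a \<Rightarrow> 'a \<Rightarrow> bool) \<Rightarrow> nat" where
  "secure_w_dom_number w V E = (LEAST k. \<exists>f. secure_w_dom w V E f \<and> weight V f = k)"

definition is_gamma_ws_function :: "nat list \<Rightarrow> 'a set \<Rightarrow> ('a \<Rightarrow> 'a \<Rightarrow> bool) \<Rightarrow> ('a \<Rightarrow> nat) \<Rightarrow> bool" where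
  "is_gamma_ws_function w V E f \<longleftrightarrow> secure_w_dom w V E f \<and> weight V f = secure_w_dom_number w V E"

end

theory Submission
  imports Defs "HOL-Library.Indicator_Function"
begin

text \<open>A (1,0)-dominating function takes only the values 0 and 1, so for w = (1,0) the
  \<gamma>^s_w-functions of a graph are the indicator functions of its minimum secure dominating
  sets. Call a vertex u of G heavy for S if S meets H_u in at least three vertices.
  Heavy vertices of a minimum secure dominating set S of G \<circ> H can be removed one at a time
  without increasing |S|. Let v be a neighbour of a heavy u. If
  |S \<inter> H_u| + |S \<inter> H_v| \<ge> 4, replace S on H_u \<union> H_v by {u, v} \<times> {a, b}; otherwise S meets
  H_u in exactly three vertices and misses the copies of all neighbours of u, and one of these
  three vertices is moved to H_v. The new set is again secure dominating: as long as a set meets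
  both H_u and H_v, it dominates every vertex of H_u \<union> H_v and every vertex G-adjacent to u or
  v, and a guard may always leave a copy that keeps another guard.\<close>

section \<open>Secure (1,0)-domination and secure dominating sets\<close>

definition dominating :: "'a set \<Rightarrow> ('a \<Rightarrow> 'a \<Rightarrow> bool) \<Rightarrow> 'a set \<Rightarrow> bool" where
  "dominating V E S \<longleftrightarrow> S \<subseteq> V \<and> (\<forall>v\<in>V - S. \<exists>u\<in>S. E v u)"

definition defends :: "'a set \<Rightarrow> ('a \<Rightarrow> 'a \<Rightarrow> bool) \<Rightarrow> 'a set \<Rightarrow> 'a \<Rightarrow> 'a \<Rightarrow> bool" where
  "defends V E S u v \<longleftrightarrow> u \<in> S \<and> E v u \<and> dominating V E (insert v (S - {u}))"

definition secure_dominating :: "'a set \<Rightarrow> ('a \<Rightarrow> 'a \<Rightarrow> bool) \<Rightarrow> 'a set \<Rightarrow> bool" where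
  "secure_dominating V E S \<longleftrightarrow> dominating V E S \<and> (\<forall>v\<in>V - S. \<exists>u. defends V E S u v)"

lemma w_dom_10_indicator_iff:
  assumes "finite V" and "S \<subseteq> V"
  shows "w_dom [1, 0] V E (indicator S) \<longleftrightarrow> dominating V E S"
proof -
  have "[1, 0] ! indicator S v \<le> fsum (indicator S) (nbhd V E v) \<longleftrightarrow> (\<exists>u\<in>S. E v u)"
    if "v \<in> V - S" for v
  proof -
    have "fsum (indicator S) (nbhd V E v) = card (nbhd V E v \<inter> S)"
      unfolding fsum_def using assms(1) by (simp add: sum_indicator_eq_card nbhd_def)
    moreover have "finite (nbhd V E v \<inter> S)"
      using assms(1) by (simp add: nbhd_def)
    ultimately show ?thesis
      using that assms(2) by (auto simp: nbhd_def Suc_le_eq card_gt_0_iff)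
  qed
  then show ?thesis
    using assms(2) by (auto simp: w_dom_def dominating_def split: split_indicator)
qed

lemma w_dom_10_imp_indicator:
  assumes "w_dom [1, 0] V E f"
  shows "f = indicator {v \<in> V. f v \<noteq> 0}"
proof
  fix v
  show "f v = indicator {v \<in> V. f v \<noteq> 0} v"
    using assms by (cases "v \<in> V") (auto simp: w_dom_def indicator_def le_Suc_eq)
qed

lemma move_indicator:
  assumes "u \<in> S" and "v \<notin> S"
  shows "move (indicator S) u v = (indicator (insert v (S - {u})) :: 'a \<Rightarrow> nat)"
  using assms by (auto simp: move_def indicator_def)

lemma secure_w_dom_10_indicator_iff:
  assumes "finite V" and "S \<subseteq> V"
  shows "secure_w_dom [1, 0] V E (indicator S) \<longleftrightarrow> secure_dominating V E S"
proof -
  have "w_dom [1, 0] V E (move (indicator S) u v) \<longleftrightarrow> dominating V E (insert v (S - {u}))"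
    if "u \<in> S" and "v \<in> V - S" for u v
  proof -
    have "insert v (S - {u}) \<subseteq> V"
      using that assms(2) by auto
    then show ?thesis
      using that w_dom_10_indicator_iff[OF assms(1)] by (simp add: move_indicator)
  qed
  then have "(\<exists>u\<in>nbhd V E v. 0 < (indicator S u :: nat) \<and> w_dom [1, 0] V E (move (indicator S) u v))
      \<longleftrightarrow> (\<exists>u. defends V E S u v)" if "v \<in> V - S" for v
    using that assms(2) by (auto simp: defends_def nbhd_def indicator_def)
  then show ?thesis
    using assms w_dom_10_indicator_iff[OF assms]
    by (auto simp: secure_w_dom_def secure_dominating_def indicator_def)
qed

lemma weight_indicator:
  assumes "finite V" and "S \<subseteq> V"
  shows "weight V (indicator S) = card S"
  using assms by (simp add: weight_def sum_indicator_eq_card Int_absorb1)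

lemma ex_min_secure_dominating:
  "\<exists>S. secure_dominating V E S \<and> (\<forall>T. secure_dominating V E T \<longrightarrow> card S \<le> card T)"
proof -
  have "secure_dominating V E V"
    by (simp add: secure_dominating_def dominating_def)
  then show ?thesis
    by (rule ex_has_least_nat)
qed

lemma is_gamma_ws_function_indicator:
  assumes V: "finite V" and S: "secure_dominating V E S"
    and min: "\<And>T. secure_dominating V E T \<Longrightarrow> card S \<le> card T"
  shows "is_gamma_ws_function [1, 0] V E (indicator S)"
proof -
  have SV: "S \<subseteq> V"
    using S by (simp add: secure_dominating_def dominating_def)
  have secure: "secure_w_dom [1, 0] V E (indicator S)" and weight: "weight V (indicator S) = card S"
    using secure_w_dom_10_indicator_iff[OF V SV] weight_indicator[OF V SV] S by auto
  have "card S \<le> weight V f" if "secure_w_dom [1, 0] V E f" for f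
  proof -
    define T where "T = {v \<in> V. f v \<noteq> 0}"
    have f: "f = indicator T"
      using that w_dom_10_imp_indicator by (auto simp: secure_w_dom_def T_def)
    have TV: "T \<subseteq> V"
      by (simp add: T_def)
    have "secure_dominating V E T"
      using that secure_w_dom_10_indicator_iff[OF V TV] f by simp
    then show ?thesis
      using min weight_indicator[OF V TV] f by simp
  qed
  then have "secure_w_dom_number [1, 0] V E = card S"
    unfolding secure_w_dom_number_def using secure weight
    by (intro Least_equality) auto
  then show ?thesis
    using secure weight by (simp add: is_gamma_ws_function_def)
qed

section \<open>Domination in the lexicographic product\<close>

definition fibre :: "('a \<times> 'b) set \<Rightarrow> 'a \<Rightarrow> 'b set" where
  "fibre S x = {y. (x, y) \<in> S}"

lemma finite_fibre: "finite S \<Longrightarrow> finite (fibre S x)"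
proof -
  assume "finite S"
  moreover have "fibre S x \<subseteq> snd ` S"
    by (force simp: fibre_def)
  ultimately show ?thesis
    using finite_surj by blast
qed

lemma card_ge_2_obtains:
  assumes "2 \<le> card A"
  obtains a b where "a \<in> A" "b \<in> A" "a \<noteq> b"
  using assms card_le_Suc0_iff_eq[of A] card.infinite[of A] by fastforce

lemma card_split_two_fibres:
  assumes "finite S" and "u \<noteq> v"
  shows "card S = card {p \<in> S. fst p \<noteq> u \<and> fst p \<noteq> v} + card (fibre S u) + card (fibre S v)"
proof -
  have split: "S = {p \<in> S. fst p \<noteq> u \<and> fst p \<noteq> v} \<union> ({u} \<times> fibre S u \<union> {v} \<times> fibre S v)"
    by (auto simp: fibre_def)
  have "card S = card {p \<in> S. fst p \<noteq> u \<and> fst p \<noteq> v} + card ({u} \<times> fibre S u \<union> {v} \<times> fibre S v)"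
    by (subst split, rule card_Un_disjoint) (use assms finite_fibre[OF assms(1)] in auto)
  also have "card ({u} \<times> fibre S u \<union> {v} \<times> fibre S v) = card (fibre S u) + card (fibre S v)"
    by (subst card_Un_disjoint)
      (use assms finite_fibre[OF assms(1)] in \<open>auto simp: card_cartesian_product_singleton\<close>)
  finally show ?thesis
    by simp
qed

locale lex_product =
  fixes VG :: "'a set" and EG :: "'a \<Rightarrow> 'a \<Rightarrow> bool"
    and VH :: "'b set" and EH :: "'b \<Rightarrow> 'b \<Rightarrow> bool"
  assumes G: "simple_graph VG EG" and H: "simple_graph VH EH"
begin

abbreviation V :: "('a \<times> 'b) set" where
  "V \<equiv> VG \<times> VH"

abbreviation E :: "'a \<times> 'b \<Rightarrow> 'a \<times> 'b \<Rightarrow> bool" where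
  "E \<equiv> lex_E EG EH"

definition heavy :: "('a \<times> 'b) set \<Rightarrow> 'a set" where
  "heavy S = {x \<in> VG. 3 \<le> card (fibre S x)}"

lemma finite_VG: "finite VG" and finite_VH: "finite VH"
  using G H by (simp_all add: simple_graph_def)

lemma EG_sym: "EG x y \<Longrightarrow> EG y x"
  and EG_irrefl: "\<not> EG x x"
  and EG_in_VG: "EG x y \<Longrightarrow> x \<in> VG \<and> y \<in> VG"
  using G by (auto simp: simple_graph_def)

lemma E_Pair: "E (x, y) (x', y') \<longleftrightarrow> EG x x' \<or> (x = x' \<and> EH y y')"
  by (simp add: lex_E_def)

lemma finite_V: "finite V"
  using finite_VG finite_VH by simp

lemma finite_secure_dominating: "secure_dominating V E S \<Longrightarrow> finite S"
  using finite_subset[OF _ finite_V] by (auto simp: secure_dominating_def dominating_def)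

lemma dominating_across_edge:
  assumes R: "dominating V E R" and T: "T \<subseteq> V" and uv: "EG u v"
    and Tu: "fibre T u \<noteq> {}" and Tv: "fibre T v \<noteq> {}"
    and RT: "\<And>x y. x \<noteq> u \<Longrightarrow> x \<noteq> v \<Longrightarrow> (x, y) \<in> R \<Longrightarrow> (x, y) \<in> T"
  shows "dominating V E T"
proof -
  have near: "\<exists>q\<in>T. E (x, y) q" if xw: "EG x w" and w: "w \<in> {u, v}" for x y w
  proof -
    obtain z where "(w, z) \<in> T"
      using Tu Tv w by (auto simp: fibre_def)
    then show ?thesis
      using xw E_Pair by blast
  qed
  have "\<exists>q\<in>T. E (x, y) q" if p: "(x, y) \<in> V - T" for x y
  proof (cases "x \<in> {u, v}")
    case True
    then show ?thesis
      using near uv EG_sym by blast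
  next
    case x: False
    then obtain x' y' where q: "(x', y') \<in> R" "E (x, y) (x', y')"
      using R RT p unfolding dominating_def by fast
    show ?thesis
    proof (cases "x' \<in> {u, v}")
      case True
      then show ?thesis
        using near[of x x' y] q(2) x by (auto simp: E_Pair)
    next
      case False
      then show ?thesis
        using RT q by blast
    qed
  qed
  then show ?thesis
    using T unfolding dominating_def by auto
qed

lemma defends_from_large_fibre:
  assumes S: "dominating V E S" and S': "S' \<subseteq> V" and uv: "EG u v"
    and agree: "\<And>x y. x \<noteq> u \<Longrightarrow> x \<noteq> v \<Longrightarrow> (x, y) \<in> S' \<longleftrightarrow> (x, y) \<in> S"
    and S'u: "fibre S' u \<noteq> {}" and S'v: "fibre S' v \<noteq> {}"
    and q: "(w, z) \<in> S'" "w \<in> {u, v}" "2 \<le> card (fibre S' w)"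
    and p: "p \<in> V - S'" "E p (w, z)"
  shows "defends V E S' (w, z) p"
proof -
  let ?T = "insert p (S' - {(w, z)})"
  obtain z' where "z' \<in> fibre S' w" "z' \<noteq> z"
    using q(3) by (rule card_ge_2_obtains) auto
  then have "fibre ?T w \<noteq> {}"
    by (auto simp: fibre_def)
  moreover have "fibre S' w' \<subseteq> fibre ?T w'" if "w' \<noteq> w" for w'
    using that by (auto simp: fibre_def)
  ultimately have "fibre ?T w' \<noteq> {}" if "w' \<in> {u, v}" for w'
    using S'u S'v that by (cases "w' = w") auto
  then have Tu: "fibre ?T u \<noteq> {}" and Tv: "fibre ?T v \<noteq> {}"
    by simp_all
  have TV: "?T \<subseteq> V"
    using S' p by auto
  have "dominating V E ?T"
    by (rule dominating_across_edge[OF S TV uv Tu Tv]) (use agree q(2) in auto)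
  then show ?thesis
    using q p by (simp add: defends_def)
qed

text \<open>If x is G-adjacent to u, a spare guard of H_u defends (x, y); otherwise the S-defender
  of (x, y) still works in S', unless it lies in H_v, where S' then has a spare guard.\<close>
lemma defended_off_edge:
  assumes S: "secure_dominating V E S" and S': "S' \<subseteq> V" and uv: "EG u v"
    and agree: "\<And>x y. x \<noteq> u \<Longrightarrow> x \<noteq> v \<Longrightarrow> (x, y) \<in> S' \<longleftrightarrow> (x, y) \<in> S"
    and S'u: "2 \<le> card (fibre S' u)" and S'v: "fibre S' v \<noteq> {}"
    and S'v_large: "fibre S v \<noteq> {} \<Longrightarrow> 2 \<le> card (fibre S' v)"
    and p: "(x, y) \<in> V - S'" "x \<noteq> u" "x \<noteq> v"
  shows "\<exists>q. defends V E S' q (x, y)"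
proof -
  have S_dom: "dominating V E S"
    using S by (simp add: secure_dominating_def)
  have S'u_ne: "fibre S' u \<noteq> {}"
    using S'u by auto
  note from_large = defends_from_large_fibre[OF S_dom S' uv agree S'u_ne S'v _ _ _ p(1)]
  show ?thesis
  proof (cases "EG x u")
    case True
    obtain a where "(u, a) \<in> S'"
      using S'u_ne by (auto simp: fibre_def)
    then show ?thesis
      using from_large[of u a] True S'u by (auto simp: E_Pair)
  next
    case not_xu: False
    have "(x, y) \<in> V - S"
      using p agree by blast
    then obtain x' y' where q: "defends V E S (x', y') (x, y)"
      using S unfolding secure_dominating_def by fast
    have "x' \<noteq> u"
      using q not_xu p(2) by (auto simp: defends_def E_Pair)
    show ?thesis
    proof (cases "x' = v")
      case True
      then have "EG x v" and "fibre S v \<noteq> {}"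
        using q p(3) by (auto simp: defends_def E_Pair fibre_def)
      moreover obtain b where "(v, b) \<in> S'"
        using S'v by (auto simp: fibre_def)
      ultimately show ?thesis
        using from_large[of v b] S'v_large by (auto simp: E_Pair)
    next
      case False
      have "dominating V E (insert (x, y) (S' - {(x', y')}))"
      proof (rule dominating_across_edge[OF _ _ uv])
        show "dominating V E (insert (x, y) (S - {(x', y')}))"
          using q by (simp add: defends_def)
        show "fibre (insert (x, y) (S' - {(x', y')})) u \<noteq> {}"
          and "fibre (insert (x, y) (S' - {(x', y')})) v \<noteq> {}"
          using S'u_ne S'v \<open>x' \<noteq> u\<close> False by (auto simp: fibre_def)
      qed (use S' p agree in auto)
      then show ?thesis
        using q agree[OF \<open>x' \<noteq> u\<close> False] by (auto simp: defends_def)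
    qed
  qed
qed

lemma secure_dominating_replace_on_edge:
  assumes S: "secure_dominating V E S" and S': "S' \<subseteq> V" and uv: "EG u v"
    and agree: "\<And>x y. x \<noteq> u \<Longrightarrow> x \<noteq> v \<Longrightarrow> (x, y) \<in> S' \<longleftrightarrow> (x, y) \<in> S"
    and S'u: "2 \<le> card (fibre S' u)" and S'v: "fibre S' v \<noteq> {}"
    and S'v_large: "fibre S v \<noteq> {} \<Longrightarrow> 2 \<le> card (fibre S' v)"
    and defended_u: "\<And>y. (u, y) \<in> V - S' \<Longrightarrow> \<exists>q. defends V E S' q (u, y)"
  shows "secure_dominating V E S'"
proof -
  have S_dom: "dominating V E S"
    using S by (simp add: secure_dominating_def)
  have S'u_ne: "fibre S' u \<noteq> {}"
    using S'u by auto
  obtain a where a: "(u, a) \<in> S'"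
    using S'u_ne by (auto simp: fibre_def)
  have "dominating V E S'"
    by (rule dominating_across_edge[OF S_dom S' uv S'u_ne S'v]) (use agree in auto)
  moreover have "\<exists>q. defends V E S' q (x, y)" if p: "(x, y) \<in> V - S'" for x y
  proof -
    consider "x = u" | "x = v" | "x \<noteq> u" "x \<noteq> v"
      by blast
    then show ?thesis
    proof cases
      case 1
      then show ?thesis
        using defended_u p by blast
    next
      case 2
      then have "defends V E S' (u, a) (x, y)"
        using defends_from_large_fibre[OF S_dom S' uv agree S'u_ne S'v a _ S'u p] uv EG_sym
        by (auto simp: E_Pair)
      then show ?thesis ..
    next
      case 3
      then show ?thesis
        using defended_off_edge[OF S S' uv agree S'u S'v S'v_large p] by blast
    qed
  qed
  ultimately show ?thesis
    unfolding secure_dominating_def by auto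
qed

section \<open>Removing heavy vertices\<close>

lemma card_heavy_less:
  assumes u: "u \<in> heavy S" and S'u: "card (fibre S' u) \<le> 2" and S'v: "card (fibre S' v) \<le> 2"
    and agree: "\<And>x. x \<noteq> u \<Longrightarrow> x \<noteq> v \<Longrightarrow> fibre S' x = fibre S x"
  shows "card (heavy S') < card (heavy S)"
proof -
  have "x \<in> heavy S - {u}" if x: "x \<in> heavy S'" for x
  proof -
    have "3 \<le> card (fibre S' x)"
      using x by (simp add: heavy_def)
    then have "x \<noteq> u" and "x \<noteq> v"
      using S'u S'v by auto
    then show ?thesis
      using x agree by (simp add: heavy_def)
  qed
  then have "heavy S' \<subseteq> heavy S - {u}"
    by blast
  then have "heavy S' \<subset> heavy S"
    using u by blast
  then show ?thesis
    using finite_VG by (intro psubset_card_mono) (auto simp: heavy_def)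
qed

lemma heavy_reduction_spread:
  assumes S: "secure_dominating V E S" and uv: "EG u v" and u: "u \<in> heavy S"
    and large: "4 \<le> card (fibre S u) + card (fibre S v)"
    and ab: "a \<in> VH" "b \<in> VH" "a \<noteq> b"
  shows "\<exists>S'. secure_dominating V E S' \<and> card S' \<le> card S \<and> card (heavy S') < card (heavy S)"
proof -
  define S0 where "S0 = {p \<in> S. fst p \<noteq> u \<and> fst p \<noteq> v}"
  define S' where "S' = S0 \<union> {u, v} \<times> {a, b}"
  have "u \<noteq> v" and "u \<in> VG" and "v \<in> VG"
    using uv EG_irrefl EG_in_VG by blast+
  have S_dom: "dominating V E S"
    using S by (simp add: secure_dominating_def)
  then have SV: "S \<subseteq> V"
    by (simp add: dominating_def)
  have S'V: "S' \<subseteq> V"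
    using SV \<open>u \<in> VG\<close> \<open>v \<in> VG\<close> ab by (auto simp: S'_def S0_def)
  have agree: "(x, y) \<in> S' \<longleftrightarrow> (x, y) \<in> S" if "x \<noteq> u" "x \<noteq> v" for x y
    using that by (auto simp: S'_def S0_def)
  have S'u: "fibre S' u = {a, b}" and S'v: "fibre S' v = {a, b}"
    using \<open>u \<noteq> v\<close> by (auto simp: S'_def S0_def fibre_def)
  have "secure_dominating V E S'"
  proof (rule secure_dominating_replace_on_edge[OF S S'V uv agree])
    show "2 \<le> card (fibre S' u)" and "fibre S' v \<noteq> {}" and "2 \<le> card (fibre S' v)"
      using S'u S'v ab by auto
    fix y
    assume p: "(u, y) \<in> V - S'"
    have va: "(v, a) \<in> S'"
      by (simp add: S'_def)
    have "defends V E S' (v, a) (u, y)"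
      by (rule defends_from_large_fibre[OF S_dom S'V uv agree _ _ va _ _ p])
        (use S'u S'v ab uv in \<open>auto simp: E_Pair\<close>)
    then show "\<exists>q. defends V E S' q (u, y)" ..
  qed
  moreover have "card S' \<le> card S"
  proof -
    have "card S' \<le> card S0 + card ({u, v} \<times> {a, b})"
      unfolding S'_def by (rule card_Un_le)
    moreover have "card ({u, v} \<times> {a, b}) = 4"
      using \<open>u \<noteq> v\<close> ab by (simp add: card_cartesian_product)
    moreover have "card S = card S0 + card (fibre S u) + card (fibre S v)"
      unfolding S0_def by (rule card_split_two_fibres[OF finite_secure_dominating[OF S] \<open>u \<noteq> v\<close>])
    ultimately show ?thesis
      using large by linarith
  qed
  moreover have "card (heavy S') < card (heavy S)"
  proof (rule card_heavy_less[OF u])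
    show "card (fibre S' u) \<le> 2" and "card (fibre S' v) \<le> 2"
      using S'u S'v ab by simp_all
    show "fibre S' x = fibre S x" if "x \<noteq> u" and "x \<noteq> v" for x
      using agree[OF that] by (simp add: fibre_def)
  qed
  ultimately show ?thesis
    by blast
qed

lemma heavy_reduction_shift:
  assumes S: "secure_dominating V E S" and uv: "EG u v" and S_u: "card (fibre S u) = 3"
    and S_nbrs: "\<And>w. EG u w \<Longrightarrow> fibre S w = {}" and c: "c \<in> VH"
  shows "\<exists>S'. secure_dominating V E S' \<and> card S' \<le> card S \<and> card (heavy S') < card (heavy S)"
proof -
  obtain a b e where abe: "fibre S u = {a, b, e}" "a \<noteq> b" "b \<noteq> e" "a \<noteq> e"
    using S_u card_3_iff by metis
  then have S_mem_u: "(u, y) \<in> S \<longleftrightarrow> y \<in> {a, b, e}" for y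
    by (auto simp: fibre_def)
  define S' where "S' = insert (v, c) (S - {(u, e)})"
  have "u \<noteq> v" and "u \<in> VG" and "v \<in> VG"
    using uv EG_irrefl EG_in_VG by blast+
  have S_dom: "dominating V E S"
    using S by (simp add: secure_dominating_def)
  then have SV: "S \<subseteq> V"
    by (simp add: dominating_def)
  have "(v, c) \<notin> S"
    using S_nbrs[OF uv] by (auto simp: fibre_def)
  have S'V: "S' \<subseteq> V"
    using SV \<open>v \<in> VG\<close> c by (auto simp: S'_def)
  have agree: "(x, y) \<in> S' \<longleftrightarrow> (x, y) \<in> S" if "x \<noteq> u" "x \<noteq> v" for x y
    using that by (auto simp: S'_def)
  have S'u: "fibre S' u = {a, b}"
    using S_mem_u abe \<open>u \<noteq> v\<close> by (auto simp: S'_def fibre_def)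
  have S'v: "fibre S' v = {c}"
    using S_nbrs[OF uv] \<open>u \<noteq> v\<close> by (auto simp: S'_def fibre_def)
  have "secure_dominating V E S'"
  proof (rule secure_dominating_replace_on_edge[OF S S'V uv agree])
    show "2 \<le> card (fibre S' u)" and "fibre S' v \<noteq> {}"
      using S'u S'v abe by auto
    show "fibre S v \<noteq> {} \<Longrightarrow> 2 \<le> card (fibre S' v)"
      using S_nbrs[OF uv] by simp
    fix y
    assume p: "(u, y) \<in> V - S'"
    show "\<exists>q. defends V E S' q (u, y)"
    proof (cases "EH y a \<or> EH y b")
      case True
      then obtain z where z: "z \<in> {a, b}" "EH y z"
        by blast
      then have uz: "(u, z) \<in> S'"
        using S'u by (auto simp: fibre_def)
      have "defends V E S' (u, z) (u, y)"
        by (rule defends_from_large_fibre[OF S_dom S'V uv agree _ _ uz _ _ p])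
          (use S'u S'v abe z in \<open>auto simp: E_Pair\<close>)
      then show ?thesis ..
    next
      case False
      have "dominating V E (insert (u, y) (S - {(u, e)}))"
      proof (cases "y = e")
        case True
        then show ?thesis
          using S_dom S_mem_u by (simp add: insert_absorb)
      next
        case False
        \<comment> \<open>The defender of (u, y) in S lies in H_u, since S misses the copies of all
          neighbours of u; being adjacent to (u, y), it must be (u, e).\<close>
        have "(u, y) \<in> V - S"
          using p S_mem_u False by (auto simp: S'_def)
        then obtain x' y' where q: "defends V E S (x', y') (u, y)"
          using S unfolding secure_dominating_def by fast
        have "\<not> EG u x'"
          using q S_nbrs by (auto simp: defends_def fibre_def)
        then have "x' = u" and "EH y y'"
          using q by (auto simp: defends_def E_Pair)
        then have "y' = e"
          using q S_mem_u \<open>\<not> (EH y a \<or> EH y b)\<close> by (auto simp: defends_def)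
        then show ?thesis
          using q \<open>x' = u\<close> by (simp add: defends_def)
      qed
      moreover have "insert (u, y) (S' - {(v, c)}) = insert (u, y) (S - {(u, e)})"
        using \<open>(v, c) \<notin> S\<close> by (auto simp: S'_def)
      ultimately have "defends V E S' (v, c) (u, y)"
        using uv by (simp add: defends_def S'_def E_Pair)
      then show ?thesis ..
    qed
  qed
  moreover have "card S' = card S"
  proof -
    have "finite S" and "(u, e) \<in> S"
      using finite_secure_dominating[OF S] S_mem_u by auto
    then show ?thesis
      using card.remove[of S "(u, e)"] \<open>(v, c) \<notin> S\<close> by (simp add: S'_def)
  qed
  moreover have "card (heavy S') < card (heavy S)"
  proof (rule card_heavy_less)
    show "u \<in> heavy S"
      using S_u \<open>u \<in> VG\<close> by (simp add: heavy_def)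
    show "card (fibre S' u) \<le> 2" and "card (fibre S' v) \<le> 2"
      using S'u S'v by (simp_all add: card_insert_if)
    show "fibre S' x = fibre S x" if "x \<noteq> u" and "x \<noteq> v" for x
      using agree[OF that] by (simp add: fibre_def)
  qed
  ultimately show ?thesis
    by auto
qed

lemma heavy_reduction:
  assumes no_iso: "no_isolated VG EG" and VH: "2 \<le> card VH"
    and S: "secure_dominating V E S" and u: "u \<in> heavy S"
  shows "\<exists>S'. secure_dominating V E S' \<and> card S' \<le> card S \<and> card (heavy S') < card (heavy S)"
proof -
  obtain a b where ab: "a \<in> VH" "b \<in> VH" "a \<noteq> b"
    using VH by (rule card_ge_2_obtains)
  have S_u: "3 \<le> card (fibre S u)" and "u \<in> VG"
    using u by (simp_all add: heavy_def)
  show ?thesis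
  proof (cases "\<exists>v. EG u v \<and> 4 \<le> card (fibre S u) + card (fibre S v)")
    case True
    then show ?thesis
      using heavy_reduction_spread[OF S _ u _ ab] by blast
  next
    case False
    obtain v where uv: "EG u v"
      using no_iso \<open>u \<in> VG\<close> by (auto simp: no_isolated_def nbhd_def)
    have "fibre S w = {}" if "EG u w" for w
    proof -
      have "card (fibre S w) = 0"
        using False S_u that by force
      then show ?thesis
        using finite_fibre[OF finite_secure_dominating[OF S]] by simp
    qed
    moreover have "card (fibre S u) = 3"
      using False S_u uv by force
    ultimately show ?thesis
      using heavy_reduction_shift[OF S uv _ _ ab(1)] by blast
  qed
qed

lemma secure_dominating_without_heavy:
  assumes no_iso: "no_isolated VG EG" and VH: "2 \<le> card VH"
    and S: "secure_dominating V E S"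
  shows "\<exists>S'. secure_dominating V E S' \<and> card S' \<le> card S \<and> heavy S' = {}"
  using S
proof (induction "card (heavy S)" arbitrary: S rule: less_induct)
  case less
  show ?case
  proof (cases "heavy S = {}")
    case True
    then show ?thesis
      using less.prems by blast
  next
    case False
    then obtain u where "u \<in> heavy S"
      by blast
    then obtain S' where S': "secure_dominating V E S'" "card S' \<le> card S"
      and fewer: "card (heavy S') < card (heavy S)"
      using heavy_reduction[OF no_iso VH less.prems] by blast
    from less.hyps[OF fewer S'(1)] obtain S'' where
      "secure_dominating V E S''" "card S'' \<le> card S'" "heavy S'' = {}"
      by blast
    then show ?thesis
      using S'(2) le_trans by blast
  qed
qed

theorem ex_gamma_function_with_light_fibres:
  assumes no_iso: "no_isolated VG EG" and VH: "2 \<le> card VH"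
  shows "\<exists>f. is_gamma_ws_function [1, 0] V E f \<and> (\<forall>u\<in>VG. (\<Sum>y\<in>VH. f (u, y)) \<le> 2)"
proof -
  obtain S0 where S0: "secure_dominating V E S0"
    and min: "\<And>T. secure_dominating V E T \<Longrightarrow> card S0 \<le> card T"
    using ex_min_secure_dominating by blast
  obtain S where S: "secure_dominating V E S" "card S \<le> card S0" and light: "heavy S = {}"
    using secure_dominating_without_heavy[OF no_iso VH S0] by blast
  have "is_gamma_ws_function [1, 0] V E (indicator S)"
    using is_gamma_ws_function_indicator[OF finite_V S(1)] min S(2) le_trans by blast
  moreover have "(\<Sum>y\<in>VH. indicator S (u, y)) \<le> (2 :: nat)" if "u \<in> VG" for u
  proof -
    have "(\<Sum>y\<in>VH. indicator S (u, y)) = (\<Sum>y\<in>VH. indicator (fibre S u) y :: nat)"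
      by (simp add: indicator_def fibre_def)
    also have "\<dots> = card (VH \<inter> fibre S u)"
      using finite_VH by (rule sum_indicator_eq_card)
    also have "\<dots> \<le> card (fibre S u)"
      using finite_fibre[OF finite_secure_dominating[OF S(1)]] by (rule card_mono) simp
    also have "\<dots> \<le> 2"
      using light that by (auto simp: heavy_def)
    finally show ?thesis .
  qed
  ultimately show ?thesis
    by blast
qed

end

theorem lemma5:
  fixes VG :: "'a set" and EG :: "'a \<Rightarrow> 'a \<Rightarrow> bool"
    and VH :: "'b set" and EH :: "'b \<Rightarrow> 'b \<Rightarrow> bool"
  assumes "simple_graph VG EG" and "no_isolated VG EG"
    and "simple_graph VH EH" and "nontrivial VH"
  shows "\<exists>f. is_gamma_ws_function [1, 0] (lex_V VG VH) (lex_E EG EH) f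
            \<and> (\<forall>u\<in>VG. (\<Sum>y\<in>VH. f (u, y)) \<le> 2)"
proof -
  interpret lex_product VG EG VH EH
    using assms(1,3) by unfold_locales
  show ?thesis
    using ex_gamma_function_with_light_fibres assms(2,4) by (simp add: lex_V_def nontrivial_def)
qed

end
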